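(* If $u,v:\mathbb{C}\to\mathbb{R}$ are harmonic and $f=u+iv$ is nonconstant, then $\mathcal{D}(f(\mathbb{C}))$ is a nonempty closed subset of $\partial\mathbb{D}$.
   Context: $\partial\mathbb{D}$ is the unit circle. For a set $\mathcal{R}\subset\mathbb{C}$, a point $e^{i\theta}\in\partial\mathbb{D}$ is an asymptotic direction of $\mathcal{R}$ if there exist points $w_n\in\mathcal{R}$ and positive numbers $\varepsilon_n\to 0$ with $\varepsilon_n w_n\to e^{i\theta}$; $\mathcal{D}(\mathcal{R})$ denotes the set of asymptotic directions of $\mathcal{R}$. *)

theory Defs
  imports "HOL-Analysis.Analysis"
begin

definition pdx :: "(complex \<Rightarrow> real) \<Rightarrow> complex \<Rightarrow> real" where
  "pdx u z = deriv (\<lambda>t::real. u (z + complex_of_real t)) 0"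

definition pdy :: "(complex \<Rightarrow> real) \<Rightarrow> complex \<Rightarrow> real" where
  "pdy u z = deriv (\<lambda>t::real. u (z + \<i> * complex_of_real t)) 0"

definition has_partials :: "(complex \<Rightarrow> real) \<Rightarrow> bool" where
  "has_partials u \<longleftrightarrow>
     (\<forall>z. (\<lambda>t::real. u (z + complex_of_real t)) differentiable (at 0)
        \<and> (\<lambda>t::real. u (z + \<i> * complex_of_real t)) differentiable (at 0))"

definition harmonic :: "(complex \<Rightarrow> real) \<Rightarrow> bool" where
  "harmonic u \<longleftrightarrow>
     continuous_on UNIV u \<and>
     has_partials u \<and> has_partials (pdx u) \<and> has_partials (pdy u) \<and>
     continuous_on UNIV (pdx u) \<and> continuous_on UNIV (pdy u) \<and>
     continuous_on UNIV (pdx (pdx u)) \<and> continuous_on UNIV (pdy (pdx u)) \<and>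
     continuous_on UNIV (pdx (pdy u)) \<and> continuous_on UNIV (pdy (pdy u)) \<and>
     (\<forall>z. pdx (pdx u) z + pdy (pdy u) z = 0)"

definition asym_dirs :: "complex set \<Rightarrow> complex set" where
  "asym_dirs R = {w. norm w = 1 \<and>
     (\<exists>(ws::nat \<Rightarrow> complex) (eps::nat \<Rightarrow> real).
        (\<forall>n. ws n \<in> R \<and> eps n > 0) \<and> eps \<longlonglongrightarrow> 0 \<and>
        (\<lambda>n. complex_of_real (eps n) * ws n) \<longlonglongrightarrow> w)}"

end

theory Submission
  imports Defs "HOL-Complex_Analysis.Complex_Analysis"
begin

text \<open>Compactness of the unit circle turns every unbounded set into one with an asymptotic
  direction, so it suffices that \<open>f(\<complex>)\<close> is unbounded. If it were bounded, \<open>u\<close> and \<open>v\<close>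
  would be bounded harmonic functions, hence constant by Liouville's theorem for harmonic
  functions. That theorem is reduced to the holomorphic one: by Clairaut's theorem and the
  vanishing Laplacian, \<open>h = u\<^sub>x - i u\<^sub>y\<close> satisfies the Cauchy-Riemann equations, so it has a
  primitive \<open>G\<close> with \<open>Re G - u\<close> constant; then \<open>exp \<circ> G\<close> is a bounded entire function,
  hence constant, which forces \<open>h = 0\<close>.\<close>

lemma asym_dirs_subset_sphere: "asym_dirs R \<subseteq> sphere 0 1"
  unfolding asym_dirs_def by auto

lemma asym_dirs_iff:
  "w \<in> asym_dirs R \<longleftrightarrow> norm w = 1 \<and>
     (\<forall>d>0. \<exists>r\<in>R. \<exists>e. 0 < e \<and> e < d \<and> dist (complex_of_real e * r) w < d)"
proof
  assume "w \<in> asym_dirs R"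
  then obtain ws eps where "norm w = 1" and ws: "\<And>n. ws n \<in> R \<and> eps n > 0"
    and eps: "eps \<longlonglongrightarrow> 0" and lim: "(\<lambda>n. complex_of_real (eps n) * ws n) \<longlonglongrightarrow> w"
    unfolding asym_dirs_def by blast
  moreover have "\<exists>r\<in>R. \<exists>e. 0 < e \<and> e < d \<and> dist (complex_of_real e * r) w < d"
    if "d > 0" for d
  proof -
    have "\<forall>\<^sub>F n in sequentially. eps n < d \<and> dist (complex_of_real (eps n) * ws n) w < d"
      using order_tendstoD(2)[OF eps that] tendstoD[OF lim that] by (rule eventually_conj)
    then obtain n where "eps n < d \<and> dist (complex_of_real (eps n) * ws n) w < d"
      by (auto simp: eventually_sequentially)
    then show ?thesis
      using ws by blast
  qed
  ultimately show "norm w = 1 \<and>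
     (\<forall>d>0. \<exists>r\<in>R. \<exists>e. 0 < e \<and> e < d \<and> dist (complex_of_real e * r) w < d)"
    by blast
next
  assume w: "norm w = 1 \<and>
     (\<forall>d>0. \<exists>r\<in>R. \<exists>e. 0 < e \<and> e < d \<and> dist (complex_of_real e * r) w < d)"
  then have "\<forall>n. \<exists>r e. r \<in> R \<and> 0 < e \<and> e < inverse (Suc n) \<and>
        dist (complex_of_real e * r) w < inverse (Suc n)"
    by (metis inverse_positive_iff_positive of_nat_0_less_iff zero_less_Suc)
  then obtain ws eps where ws: "\<And>n. ws n \<in> R \<and> 0 < eps n \<and> eps n < inverse (Suc n) \<and>
        dist (complex_of_real (eps n) * ws n) w < inverse (Suc n)"
    by metis
  have "eps \<longlonglongrightarrow> 0"
    by (rule tendsto_sandwich[OF _ _ tendsto_const LIMSEQ_inverse_real_of_nat])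
       (use ws in \<open>auto intro!: always_eventually intro: less_imp_le\<close>)
  moreover have "(\<lambda>n. dist (complex_of_real (eps n) * ws n) w) \<longlonglongrightarrow> 0"
    by (rule tendsto_sandwich[OF _ _ tendsto_const LIMSEQ_inverse_real_of_nat])
       (use ws in \<open>auto intro!: always_eventually intro: less_imp_le\<close>)
  ultimately show "w \<in> asym_dirs R"
    unfolding asym_dirs_def using w ws tendsto_dist_iff by blast
qed

lemma closed_asym_dirs: "closed (asym_dirs R)"
  unfolding closed_sequential_limits
proof (intro allI impI, elim conjE)
  fix x l
  assume x: "\<forall>n. x n \<in> asym_dirs R" and "x \<longlonglongrightarrow> l"
  have "(\<lambda>n. norm (x n)) \<longlonglongrightarrow> norm l"
    using \<open>x \<longlonglongrightarrow> l\<close> by (rule tendsto_norm)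
  moreover have "(\<lambda>n. norm (x n)) = (\<lambda>n. 1)"
    using x asym_dirs_iff by blast
  ultimately have "norm l = 1"
    using LIMSEQ_unique tendsto_const by metis
  moreover have "\<exists>r\<in>R. \<exists>e. 0 < e \<and> e < d \<and> dist (complex_of_real e * r) l < d"
    if "d > 0" for d
  proof -
    have "d/2 > 0"
      using \<open>d > 0\<close> by simp
    from tendstoD[OF \<open>x \<longlonglongrightarrow> l\<close> this] obtain n where n: "dist (x n) l < d/2"
      by (auto simp: eventually_sequentially)
    obtain r e where "r \<in> R" "0 < e" "e < d/2" "dist (complex_of_real e * r) (x n) < d/2"
      using x asym_dirs_iff \<open>d/2 > 0\<close> by blast
    moreover have "dist (complex_of_real e * r) l < d"
      using dist_triangle[of "complex_of_real e * r" l "x n"] calculation(4) n by linarith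
    ultimately show ?thesis
      by (intro bexI[of _ r] exI[of _ e]) auto
  qed
  ultimately show "l \<in> asym_dirs R"
    unfolding asym_dirs_iff by blast
qed

lemma asym_dirs_nonempty_if_unbounded:
  assumes "\<not> bounded R"
  shows "asym_dirs R \<noteq> {}"
proof -
  have "\<forall>n. \<exists>r\<in>R. norm r > Suc n"
    using assms unfolding bounded_iff by (meson not_le)
  then obtain r where r: "\<And>n. r n \<in> R \<and> norm (r n) > Suc n"
    by metis
  then have r_nonzero: "r n \<noteq> 0" for n
    by (metis norm_zero not_less_zero of_nat_less_0_iff less_trans)
  define s where "s n = r n / complex_of_real (norm (r n))" for n
  have "s n \<in> sphere 0 1" for n
    using r_nonzero by (simp add: s_def norm_divide)
  then obtain l \<sigma> where "l \<in> sphere 0 1" "strict_mono \<sigma>" and lim: "(s \<circ> \<sigma>) \<longlonglongrightarrow> l"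
    using compact_sphere[of 0 1] unfolding compact_eq_seq_compact_metric seq_compact_def by metis
  define eps where "eps n = 1 / norm (r (\<sigma> n))" for n
  have eps_pos: "eps n > 0" for n
    using r_nonzero by (simp add: eps_def)
  have "eps n \<le> inverse (Suc n)" for n
  proof -
    have "real (Suc n) \<le> Suc (\<sigma> n)"
      using seq_suble[OF \<open>strict_mono \<sigma>\<close>, of n] by simp
    also have "\<dots> < norm (r (\<sigma> n))"
      using r by blast
    finally show ?thesis
      unfolding eps_def by (simp add: divide_simps)
  qed
  then have "eps \<longlonglongrightarrow> 0"
    by (intro tendsto_sandwich[OF _ _ tendsto_const LIMSEQ_inverse_real_of_nat])
       (use eps_pos in \<open>auto intro!: always_eventually intro: less_imp_le\<close>)
  moreover have "complex_of_real (eps n) * r (\<sigma> n) = (s \<circ> \<sigma>) n" for n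
    by (simp add: eps_def s_def divide_inverse mult.commute)
  ultimately have "l \<in> asym_dirs R"
    unfolding asym_dirs_def using \<open>l \<in> sphere 0 1\<close> eps_pos r lim[unfolded o_def]
    by (auto intro!: exI[of _ "r \<circ> \<sigma>"] exI[of _ eps])
  then show ?thesis
    by blast
qed

lemma DERIV_along_line_shift:
  fixes g :: "complex \<Rightarrow> real"
  assumes "\<And>z. ((\<lambda>t. g (z + c * complex_of_real t)) has_real_derivative D z) (at 0)"
  shows "((\<lambda>t. g (w + c * complex_of_real t)) has_real_derivative D (w + c * complex_of_real s)) (at s)"
proof -
  have "(\<lambda>t. g ((w + c * complex_of_real s) + c * complex_of_real t)) =
      (\<lambda>t. g (w + c * complex_of_real (t + s)))"
    by (simp add: algebra_simps)
  then show ?thesis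
    using assms[of "w + c * complex_of_real s"] DERIV_shift[of "\<lambda>t. g (w + c * complex_of_real t)" _ 0 s]
    by simp
qed

lemma has_partials_DERIV_pdx:
  assumes "has_partials u"
  shows "((\<lambda>t. u (w + complex_of_real t)) has_real_derivative pdx u (w + complex_of_real s)) (at s)"
proof -
  have "((\<lambda>t. u (z + 1 * complex_of_real t)) has_real_derivative pdx u z) (at 0)" for z
    using assms unfolding has_partials_def pdx_def
    by (simp add: DERIV_deriv_iff_real_differentiable)
  from DERIV_along_line_shift[OF this] show ?thesis
    by simp
qed

lemma has_partials_DERIV_pdy:
  assumes "has_partials u"
  shows "((\<lambda>t. u (w + \<i> * complex_of_real t)) has_real_derivative pdy u (w + \<i> * complex_of_real s)) (at s)"
proof -
  have "((\<lambda>t. u (z + \<i> * complex_of_real t)) has_real_derivative pdy u z) (at 0)" for z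
    using assms unfolding has_partials_def pdy_def
    by (simp add: DERIV_deriv_iff_real_differentiable)
  from DERIV_along_line_shift[OF this] show ?thesis .
qed

lemma mean_value_from_zero:
  fixes g :: "real \<Rightarrow> real"
  assumes "\<And>t. (g has_real_derivative g' t) (at t)"
  shows "\<exists>t. \<bar>t\<bar> \<le> \<bar>a\<bar> \<and> g a - g 0 = a * g' t"
proof (cases a "0::real" rule: linorder_cases)
  case less
  with MVT2[OF less, of g g'] assms obtain t where "a < t" "t < 0" "g 0 - g a = (0 - a) * g' t"
    by blast
  then show ?thesis
    by (intro exI[of _ t]) (auto simp: algebra_simps)
next
  case greater
  with MVT2[OF greater, of g g'] assms obtain t where "0 < t" "t < a" "g a - g 0 = (a - 0) * g' t"
    by blast
  then show ?thesis
    by (intro exI[of _ t]) auto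
qed simp

lemma dist_shift_le: "dist (z + complex_of_real s + \<i> * complex_of_real t) z \<le> \<bar>s\<bar> + \<bar>t\<bar>"
  using norm_triangle_ineq[of "complex_of_real s" "\<i> * complex_of_real t"]
  by (simp add: dist_norm norm_mult add.assoc)

lemma has_derivative_continuous_partials:
  assumes hp: "has_partials u" and "continuous_on UNIV (pdx u)" "continuous_on UNIV (pdy u)"
  shows "(u has_derivative (\<lambda>w. pdx u z * Re w + pdy u z * Im w)) (at z)"
  unfolding has_derivative_at_alt
proof (intro conjI allI impI)
  show "bounded_linear (\<lambda>w. pdx u z * Re w + pdy u z * Im w)"
    by (intro bounded_linear_add bounded_linear_mult_right[THEN bounded_linear_compose]
        bounded_linear_Re bounded_linear_Im)
  fix e :: real
  assume "e > 0"
  then have "e/2 > 0"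
    by simp
  obtain d1 where "d1 > 0" and d1: "\<And>x. dist x z < d1 \<Longrightarrow> dist (pdx u x) (pdx u z) < e/2"
    using assms(2) \<open>e/2 > 0\<close> unfolding continuous_on_iff by blast
  obtain d2 where "d2 > 0" and d2: "\<And>x. dist x z < d2 \<Longrightarrow> dist (pdy u x) (pdy u z) < e/2"
    using assms(3) \<open>e/2 > 0\<close> unfolding continuous_on_iff by blast
  show "\<exists>d>0. \<forall>y. norm (y - z) < d \<longrightarrow>
          norm (u y - u z - (pdx u z * Re (y - z) + pdy u z * Im (y - z))) \<le> e * norm (y - z)"
  proof (intro exI[of _ "min d1 d2 / 2"] conjI allI impI)
    show "min d1 d2 / 2 > 0"
      using \<open>d1 > 0\<close> \<open>d2 > 0\<close> by simp
    fix y
    assume y: "norm (y - z) < min d1 d2 / 2"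
    define a b where "a = Re (y - z)" and "b = Im (y - z)"
    have y_eq: "y = z + complex_of_real a + \<i> * complex_of_real b"
      by (simp add: a_def b_def complex_eq_iff)
    have a: "\<bar>a\<bar> \<le> norm (y - z)" and b: "\<bar>b\<bar> \<le> norm (y - z)"
      unfolding a_def b_def by (rule abs_Re_le_cmod abs_Im_le_cmod)+
    obtain s where s: "\<bar>s\<bar> \<le> \<bar>a\<bar>"
      "u (z + complex_of_real a) - u (z + complex_of_real 0) = a * pdx u (z + complex_of_real s)"
      using mean_value_from_zero[of "\<lambda>t. u (z + complex_of_real t)" "\<lambda>t. pdx u (z + complex_of_real t)" a]
        has_partials_DERIV_pdx[OF hp] by blast
    obtain t where t: "\<bar>t\<bar> \<le> \<bar>b\<bar>"
      "u (z + complex_of_real a + \<i> * complex_of_real b) - u (z + complex_of_real a + \<i> * complex_of_real 0)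
        = b * pdy u (z + complex_of_real a + \<i> * complex_of_real t)"
      using mean_value_from_zero[of "\<lambda>t. u (z + complex_of_real a + \<i> * complex_of_real t)"
          "\<lambda>t. pdy u (z + complex_of_real a + \<i> * complex_of_real t)" b]
        has_partials_DERIV_pdy[OF hp] by blast
    have "dist (z + complex_of_real s + \<i> * complex_of_real 0) z < d1"
      using dist_shift_le[of z s 0] s(1) a y by linarith
    then have Ex: "\<bar>pdx u (z + complex_of_real s) - pdx u z\<bar> \<le> e/2"
      using d1 by (fastforce simp: dist_real_def)
    have "dist (z + complex_of_real a + \<i> * complex_of_real t) z < d2"
      using dist_shift_le[of z a t] t(1) a b y by linarith
    then have Ey: "\<bar>pdy u (z + complex_of_real a + \<i> * complex_of_real t) - pdy u z\<bar> \<le> e/2"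
      using d2 by (fastforce simp: dist_real_def)
    have "u y - u z - (pdx u z * Re (y - z) + pdy u z * Im (y - z)) =
        a * (pdx u (z + complex_of_real s) - pdx u z) +
        b * (pdy u (z + complex_of_real a + \<i> * complex_of_real t) - pdy u z)"
      using s(2) t(2) y_eq by (simp add: a_def[symmetric] b_def[symmetric] algebra_simps)
    also have "\<bar>\<dots>\<bar> \<le> \<bar>a\<bar> * \<bar>pdx u (z + complex_of_real s) - pdx u z\<bar> +
        \<bar>b\<bar> * \<bar>pdy u (z + complex_of_real a + \<i> * complex_of_real t) - pdy u z\<bar>"
      by (metis abs_mult abs_triangle_ineq)
    also have "\<dots> \<le> \<bar>a\<bar> * (e/2) + \<bar>b\<bar> * (e/2)"
      by (intro add_mono mult_left_mono Ex Ey abs_ge_zero)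
    also have "\<dots> \<le> e * norm (y - z)"
      using mult_left_mono[OF add_mono[OF a b], of e] \<open>e > 0\<close> by (simp add: algebra_simps)
    finally show "norm (u y - u z - (pdx u z * Re (y - z) + pdy u z * Im (y - z))) \<le> e * norm (y - z)"
      by simp
  qed
qed

definition square_diff :: "(complex \<Rightarrow> real) \<Rightarrow> complex \<Rightarrow> real \<Rightarrow> real" where
  "square_diff u z h = u (z + complex_of_real h + \<i> * complex_of_real h) - u (z + \<i> * complex_of_real h)
     - u (z + complex_of_real h) + u z"

lemma square_diff_pdy_pdx:
  assumes "has_partials u" "has_partials (pdx u)"
  shows "\<exists>s t. \<bar>s\<bar> \<le> \<bar>h\<bar> \<and> \<bar>t\<bar> \<le> \<bar>h\<bar> \<and>
    square_diff u z h = h * h * pdy (pdx u) (z + complex_of_real s + \<i> * complex_of_real t)"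
proof -
  define \<phi> where "\<phi> s = u (z + \<i> * complex_of_real h + complex_of_real s) - u (z + complex_of_real s)" for s
  have "(\<phi> has_real_derivative
      pdx u (z + \<i> * complex_of_real h + complex_of_real s) - pdx u (z + complex_of_real s)) (at s)" for s
    unfolding \<phi>_def by (intro DERIV_diff has_partials_DERIV_pdx[OF assms(1)])
  from mean_value_from_zero[OF this, of h] obtain s where "\<bar>s\<bar> \<le> \<bar>h\<bar>"
    and s: "\<phi> h - \<phi> 0 = h * (pdx u (z + \<i> * complex_of_real h + complex_of_real s) - pdx u (z + complex_of_real s))"
    by blast
  from mean_value_from_zero[OF has_partials_DERIV_pdy[OF assms(2), of "z + complex_of_real s"], of h]
  obtain t where "\<bar>t\<bar> \<le> \<bar>h\<bar>"
    and t: "pdx u (z + complex_of_real s + \<i> * complex_of_real h) - pdx u (z + complex_of_real s + \<i> * complex_of_real 0)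
      = h * pdy (pdx u) (z + complex_of_real s + \<i> * complex_of_real t)"
    by blast
  have "square_diff u z h = \<phi> h - \<phi> 0"
    by (simp add: square_diff_def \<phi>_def algebra_simps)
  also have "\<dots> = h * h * pdy (pdx u) (z + complex_of_real s + \<i> * complex_of_real t)"
    using s t by (simp add: algebra_simps)
  finally show ?thesis
    using \<open>\<bar>s\<bar> \<le> \<bar>h\<bar>\<close> \<open>\<bar>t\<bar> \<le> \<bar>h\<bar>\<close> by blast
qed

lemma square_diff_pdx_pdy:
  assumes "has_partials u" "has_partials (pdy u)"
  shows "\<exists>s t. \<bar>s\<bar> \<le> \<bar>h\<bar> \<and> \<bar>t\<bar> \<le> \<bar>h\<bar> \<and>
    square_diff u z h = h * h * pdx (pdy u) (z + complex_of_real s + \<i> * complex_of_real t)"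
proof -
  define \<kappa> where "\<kappa> t = u (z + complex_of_real h + \<i> * complex_of_real t) - u (z + \<i> * complex_of_real t)" for t
  have "(\<kappa> has_real_derivative
      pdy u (z + complex_of_real h + \<i> * complex_of_real t) - pdy u (z + \<i> * complex_of_real t)) (at t)" for t
    unfolding \<kappa>_def by (intro DERIV_diff has_partials_DERIV_pdy[OF assms(1)])
  from mean_value_from_zero[OF this, of h] obtain t where "\<bar>t\<bar> \<le> \<bar>h\<bar>"
    and t: "\<kappa> h - \<kappa> 0 = h * (pdy u (z + complex_of_real h + \<i> * complex_of_real t) - pdy u (z + \<i> * complex_of_real t))"
    by blast
  from mean_value_from_zero[OF has_partials_DERIV_pdx[OF assms(2), of "z + \<i> * complex_of_real t"], of h]
  obtain s where "\<bar>s\<bar> \<le> \<bar>h\<bar>"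
    and s: "pdy u (z + \<i> * complex_of_real t + complex_of_real h) - pdy u (z + \<i> * complex_of_real t + complex_of_real 0)
      = h * pdx (pdy u) (z + \<i> * complex_of_real t + complex_of_real s)"
    by blast
  have "square_diff u z h = \<kappa> h - \<kappa> 0"
    by (simp add: square_diff_def \<kappa>_def algebra_simps)
  also have "\<dots> = h * h * pdx (pdy u) (z + complex_of_real s + \<i> * complex_of_real t)"
    using s t by (simp add: algebra_simps)
  finally show ?thesis
    using \<open>\<bar>s\<bar> \<le> \<bar>h\<bar>\<close> \<open>\<bar>t\<bar> \<le> \<bar>h\<bar>\<close> by blast
qed

lemma pdy_pdx_eq_pdx_pdy:
  assumes "has_partials u" "has_partials (pdx u)" "has_partials (pdy u)"
    and "continuous_on UNIV (pdy (pdx u))" "continuous_on UNIV (pdx (pdy u))"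
  shows "pdy (pdx u) z = pdx (pdy u) z"
proof (rule ccontr)
  assume "pdy (pdx u) z \<noteq> pdx (pdy u) z"
  define \<epsilon> where "\<epsilon> = \<bar>pdy (pdx u) z - pdx (pdy u) z\<bar> / 2"
  have "\<epsilon> > 0"
    using \<open>pdy (pdx u) z \<noteq> pdx (pdy u) z\<close> by (simp add: \<epsilon>_def)
  obtain d1 where "d1 > 0" and d1: "\<And>x. dist x z < d1 \<Longrightarrow> dist (pdy (pdx u) x) (pdy (pdx u) z) < \<epsilon>"
    using assms(4) \<open>\<epsilon> > 0\<close> unfolding continuous_on_iff by blast
  obtain d2 where "d2 > 0" and d2: "\<And>x. dist x z < d2 \<Longrightarrow> dist (pdx (pdy u) x) (pdx (pdy u) z) < \<epsilon>"
    using assms(5) \<open>\<epsilon> > 0\<close> unfolding continuous_on_iff by blast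
  define h where "h = min d1 d2 / 4"
  have "h > 0"
    using \<open>d1 > 0\<close> \<open>d2 > 0\<close> by (simp add: h_def)
  obtain s1 t1 where st1: "\<bar>s1\<bar> \<le> h" "\<bar>t1\<bar> \<le> h"
    and sq1: "square_diff u z h = h * h * pdy (pdx u) (z + complex_of_real s1 + \<i> * complex_of_real t1)"
    using square_diff_pdy_pdx[OF assms(1,2), of h z] \<open>h > 0\<close> by auto
  obtain s2 t2 where st2: "\<bar>s2\<bar> \<le> h" "\<bar>t2\<bar> \<le> h"
    and sq2: "square_diff u z h = h * h * pdx (pdy u) (z + complex_of_real s2 + \<i> * complex_of_real t2)"
    using square_diff_pdx_pdy[OF assms(1,3), of h z] \<open>h > 0\<close> by auto
  have "dist (z + complex_of_real s1 + \<i> * complex_of_real t1) z < d1"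
    using dist_shift_le[of z s1 t1] st1 \<open>h > 0\<close> unfolding h_def by linarith
  with d1 have "dist (pdy (pdx u) (z + complex_of_real s1 + \<i> * complex_of_real t1)) (pdy (pdx u) z) < \<epsilon>" .
  moreover have "pdy (pdx u) (z + complex_of_real s1 + \<i> * complex_of_real t1) =
      pdx (pdy u) (z + complex_of_real s2 + \<i> * complex_of_real t2)"
    using sq1 sq2 \<open>h > 0\<close> by simp
  moreover have "dist (z + complex_of_real s2 + \<i> * complex_of_real t2) z < d2"
    using dist_shift_le[of z s2 t2] st2 \<open>h > 0\<close> unfolding h_def by linarith
  with d2 have "dist (pdx (pdy u) (z + complex_of_real s2 + \<i> * complex_of_real t2)) (pdx (pdy u) z) < \<epsilon>" .
  ultimately have "dist (pdy (pdx u) z) (pdx (pdy u) z) < \<epsilon> + \<epsilon>"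
    by (metis dist_commute dist_triangle_less_add)
  then show False
    unfolding \<epsilon>_def by (simp add: dist_real_def)
qed

lemma harmonic_has_field_derivative_gradient:
  assumes "harmonic u"
  shows "((\<lambda>z. complex_of_real (pdx u z) - \<i> * complex_of_real (pdy u z)) has_field_derivative
     (complex_of_real (pdx (pdx u) z) - \<i> * complex_of_real (pdy (pdx u) z))) (at z)"
proof -
  note H = assms[unfolded harmonic_def]
  have "(pdx u has_derivative (\<lambda>w. pdx (pdx u) z * Re w + pdy (pdx u) z * Im w)) (at z)"
    by (rule has_derivative_continuous_partials) (use H in auto)
  moreover have "(pdy u has_derivative (\<lambda>w. pdx (pdy u) z * Re w + pdy (pdy u) z * Im w)) (at z)"
    by (rule has_derivative_continuous_partials) (use H in auto)
  ultimately have D: "((\<lambda>z. complex_of_real (pdx u z) - \<i> * complex_of_real (pdy u z)) has_derivative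
     (\<lambda>w. complex_of_real (pdx (pdx u) z * Re w + pdy (pdx u) z * Im w) -
          \<i> * complex_of_real (pdx (pdy u) z * Re w + pdy (pdy u) z * Im w))) (at z)"
    by (intro has_derivative_diff bounded_linear.has_derivative[OF bounded_linear_of_real]
         bounded_linear.has_derivative[OF bounded_linear_mult_right])
  have "pdy (pdx u) z = pdx (pdy u) z"
    by (rule pdy_pdx_eq_pdx_pdy) (use H in auto)
  moreover have "pdy (pdy u) z = - pdx (pdx u) z"
    using H by (metis add.commute eq_neg_iff_add_eq_0)
  ultimately have "(\<lambda>w. complex_of_real (pdx (pdx u) z * Re w + pdy (pdx u) z * Im w) -
          \<i> * complex_of_real (pdx (pdy u) z * Re w + pdy (pdy u) z * Im w)) =
      (*) (complex_of_real (pdx (pdx u) z) - \<i> * complex_of_real (pdy (pdx u) z))"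
    by (intro ext) (simp add: complex_eq_iff algebra_simps)
  with D show ?thesis
    unfolding has_field_derivative_def by simp
qed

lemma harmonic_bounded_constant:
  assumes "harmonic u" and "bounded (range u)"
  shows "u z = u w"
proof -
  note H = assms(1)[unfolded harmonic_def]
  have Du: "(u has_derivative (\<lambda>w. pdx u z * Re w + pdy u z * Im w)) (at z)" for z
    by (rule has_derivative_continuous_partials) (use H in auto)
  define h where "h z = complex_of_real (pdx u z) - \<i> * complex_of_real (pdy u z)" for z
  have "h holomorphic_on UNIV"
    unfolding holomorphic_on_def field_differentiable_def h_def
    using harmonic_has_field_derivative_gradient[OF assms(1)] by (blast intro: has_field_derivative_at_within)
  then obtain G where G: "\<And>z. (G has_field_derivative h z) (at z)"
    using holomorphic_convex_primitive'[OF convex_UNIV open_UNIV] by auto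
  have "((\<lambda>z. Re (G z) - u z) has_derivative (\<lambda>_. 0)) (at z)" for z
  proof -
    have "((\<lambda>z. Re (G z)) has_derivative (\<lambda>w. Re (h z * w))) (at z)"
      using bounded_linear.has_derivative[OF bounded_linear_Re G[of z, unfolded has_field_derivative_def]] .
    from has_derivative_diff[OF this Du[of z]] show ?thesis
      by (simp add: h_def)
  qed
  then have ReG: "Re (G z) - u z = Re (G 0) - u 0" for z
    by (intro has_derivative_zero_unique[OF convex_UNIV, of "\<lambda>z. Re (G z) - u z"]) auto
  obtain B where B: "\<And>z. \<bar>u z\<bar> \<le> B"
    using assms(2) unfolding bounded_iff by auto
  have DexpG: "((\<lambda>z. exp (G z)) has_field_derivative exp (G z) * h z) (at z)" for z
    by (rule DERIV_chain2[OF DERIV_exp G])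
  then have "(\<lambda>z. exp (G z)) holomorphic_on UNIV"
    unfolding holomorphic_on_def field_differentiable_def by (blast intro: has_field_derivative_at_within)
  moreover have "bounded (range (\<lambda>z. exp (G z)))"
    unfolding bounded_iff
  proof (intro exI[of _ "exp (B + Re (G 0) - u 0)"] ballI)
    fix x
    assume "x \<in> range (\<lambda>z. exp (G z))"
    then obtain z where "x = exp (G z)"
      by blast
    then show "norm x \<le> exp (B + Re (G 0) - u 0)"
      using B[of z] ReG[of z] by simp
  qed
  ultimately obtain k where k: "\<And>z. exp (G z) = k"
    using Liouville_theorem unfolding constant_on_def by blast
  have "((\<lambda>z. exp (G z)) has_field_derivative 0) (at z)" for z
    unfolding k by simp
  then have "exp (G z) * h z = 0" for z
    using DERIV_unique[OF DexpG] by blast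
  then have "h z = 0" for z
    by simp
  then have "pdx u z = 0 \<and> pdy u z = 0" for z
    by (simp add: h_def complex_eq_iff)
  then have "(u has_derivative (\<lambda>_. 0)) (at z)" for z
    using Du[of z] by simp
  then show ?thesis
    by (intro has_derivative_zero_unique[OF convex_UNIV, of u]) auto
qed

theorem corollary2:
  fixes u v :: "complex \<Rightarrow> real"
  assumes "harmonic u" and "harmonic v"
    and "\<not> (\<exists>c. \<forall>z. complex_of_real (u z) + \<i> * complex_of_real (v z) = c)"
  shows "asym_dirs (range (\<lambda>z. complex_of_real (u z) + \<i> * complex_of_real (v z))) \<noteq> {}
    \<and> closed (asym_dirs (range (\<lambda>z. complex_of_real (u z) + \<i> * complex_of_real (v z))))
    \<and> asym_dirs (range (\<lambda>z. complex_of_real (u z) + \<i> * complex_of_real (v z))) \<subseteq> sphere 0 1"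
proof (intro conjI closed_asym_dirs asym_dirs_subset_sphere asym_dirs_nonempty_if_unbounded notI)
  let ?f = "\<lambda>z. complex_of_real (u z) + \<i> * complex_of_real (v z)"
  assume "bounded (range ?f)"
  then have "bounded (Re ` range ?f)" "bounded (Im ` range ?f)"
    by (simp_all add: bounded_linear_image bounded_linear_Re bounded_linear_Im)
  then have "bounded (range u)" "bounded (range v)"
    by (simp_all add: image_image)
  then have "u z = u 0" "v z = v 0" for z
    using harmonic_bounded_constant assms(1,2) by blast+
  then show False
    using assms(3) by metis
qed

end
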